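(* Let $\mathcal{B}$ be a $\sigma$-algebra on a nonempty set $E$. A $\sigma$-maxitive measure on $\mathcal{B}$ is optimal if and only if it is exhaustive.
   Context: A maxitive measure on $\mathcal{B}$ is $\nu:\mathcal{B}\to[0,\infty]$ with $\nu(\emptyset)=0$ and $\nu(B\cup B')=\max(\nu(B),\nu(B'))$; it is $\sigma$-maxitive if moreover $\nu(\bigcup_nB_n)=\lim_n\nu(B_n)$ for every nondecreasing sequence $(B_n)$ in $\mathcal{B}$ (continuity from below). $\nu$ is continuous from above if $\nu(\bigcap_nB_n)=\lim_n\nu(B_n)$ for every nonincreasing sequence $B_1\supset B_2\supset\cdots$ in $\mathcal{B}$ (with no finiteness requirement). An optimal measure is a maxitive measure that is continuous from both above and below. $\nu$ is exhaustive if $\nu(B_n)\to0$ for every sequence $(B_n)$ of pairwise disjoint elements of $\mathcal{B}$. *)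

theory Defs
  imports "HOL-Analysis.Analysis"
begin

text \<open>Set functions \<nu> : 'a set \<Rightarrow> [0,\<infinity>] (values in ennreal), considered on a
  collection of sets \<B> (only their values on members of \<B> matter).\<close>

definition maxitive :: "'a set set \<Rightarrow> ('a set \<Rightarrow> ennreal) \<Rightarrow> bool" where
  "maxitive \<B> \<nu> \<longleftrightarrow> \<nu> {} = 0 \<and>
     (\<forall>B\<in>\<B>. \<forall>B'\<in>\<B>. \<nu> (B \<union> B') = max (\<nu> B) (\<nu> B'))"

definition continuous_from_below :: "'a set set \<Rightarrow> ('a set \<Rightarrow> ennreal) \<Rightarrow> bool" where
  "continuous_from_below \<B> \<nu> \<longleftrightarrow>
     (\<forall>B :: nat \<Rightarrow> 'a set. range B \<subseteq> \<B> \<and> incseq B \<longrightarrow>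
        (\<lambda>n. \<nu> (B n)) \<longlonglongrightarrow> \<nu> (\<Union>n. B n))"

definition continuous_from_above :: "'a set set \<Rightarrow> ('a set \<Rightarrow> ennreal) \<Rightarrow> bool" where
  "continuous_from_above \<B> \<nu> \<longleftrightarrow>
     (\<forall>B :: nat \<Rightarrow> 'a set. range B \<subseteq> \<B> \<and> decseq B \<longrightarrow>
        (\<lambda>n. \<nu> (B n)) \<longlonglongrightarrow> \<nu> (\<Inter>n. B n))"

definition sigma_maxitive :: "'a set set \<Rightarrow> ('a set \<Rightarrow> ennreal) \<Rightarrow> bool" where
  "sigma_maxitive \<B> \<nu> \<longleftrightarrow> maxitive \<B> \<nu> \<and> continuous_from_below \<B> \<nu>"

definition optimal :: "'a set set \<Rightarrow> ('a set \<Rightarrow> ennreal) \<Rightarrow> bool" where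
  "optimal \<B> \<nu> \<longleftrightarrow> maxitive \<B> \<nu> \<and> continuous_from_below \<B> \<nu> \<and> continuous_from_above \<B> \<nu>"

definition exhaustive :: "'a set set \<Rightarrow> ('a set \<Rightarrow> ennreal) \<Rightarrow> bool" where
  "exhaustive \<B> \<nu> \<longleftrightarrow>
     (\<forall>B :: nat \<Rightarrow> 'a set. range B \<subseteq> \<B> \<and> disjoint_family B \<longrightarrow>
        (\<lambda>n. \<nu> (B n)) \<longlonglongrightarrow> 0)"

end

theory Submission
  imports Defs
begin

text \<open>A maxitive measure that is continuous from below is countably maxitive,
  \<open>\<nu> (\<Union>n. A n) = (SUP n. \<nu> (A n))\<close>. If \<open>B n\<close> decreases to \<open>I\<close>, then \<open>B n\<close> is the union of
  \<open>I\<close> and the disjoint differences \<open>B k - B (Suc k)\<close>, \<open>k \<ge> n\<close>, so \<open>\<nu> (B n)\<close> is the maximum of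
  \<open>\<nu> I\<close> and the tail supremum of \<open>\<nu>\<close> on these differences; for exhaustive \<open>\<nu>\<close> the tail
  suprema tend to 0. Conversely, for disjoint \<open>A n\<close> the tails \<open>\<Union>k. A (n + k)\<close> decrease to the
  empty set, and continuity from above gives \<open>\<nu> (A n) \<le> \<nu> (\<Union>k. A (n + k)) \<longlonglongrightarrow> 0\<close>.\<close>

lemma maxitive_mono:
  assumes "ring_of_sets E \<B>" and "maxitive \<B> \<nu>"
    and "A \<in> \<B>" and "C \<in> \<B>" and "A \<subseteq> C"
  shows "\<nu> A \<le> \<nu> C"
proof -
  interpret ring_of_sets E \<B> by fact
  have "\<nu> C = \<nu> (A \<union> (C - A))"
    using \<open>A \<subseteq> C\<close> by (simp add: Un_absorb1)
  also have "\<dots> = max (\<nu> A) (\<nu> (C - A))"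
    using assms(2-4) Diff unfolding maxitive_def by blast
  finally show ?thesis by simp
qed

lemma maxitive_UN_lessThan:
  fixes A :: "nat \<Rightarrow> 'a set"
  assumes "ring_of_sets E \<B>" and "maxitive \<B> \<nu>" and "range A \<subseteq> \<B>"
  shows "\<nu> (\<Union>k<n. A k) = (SUP k\<in>{..<n}. \<nu> (A k))"
proof (induction n)
  case 0
  then show ?case using assms(2) by (simp add: maxitive_def bot_ennreal)
next
  case (Suc n)
  interpret ring_of_sets E \<B> by fact
  have "(\<Union>k<n. A k) \<in> \<B>" using assms(3) by auto
  then have "\<nu> (A n \<union> (\<Union>k<n. A k)) = max (\<nu> (A n)) (\<nu> (\<Union>k<n. A k))"
    using assms(2,3) unfolding maxitive_def by blast
  then show ?case by (simp add: lessThan_Suc Suc.IH sup_max)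
qed

lemma maxitive_continuous_from_below_UN:
  fixes A :: "nat \<Rightarrow> 'a set"
  assumes "ring_of_sets E \<B>" and "maxitive \<B> \<nu>" and "continuous_from_below \<B> \<nu>"
    and "range A \<subseteq> \<B>"
  shows "\<nu> (\<Union>n. A n) = (SUP n. \<nu> (A n))"
proof (rule LIMSEQ_unique)
  interpret ring_of_sets E \<B> by fact
  have "range (\<lambda>n. \<Union>k<n. A k) \<subseteq> \<B>" and "incseq (\<lambda>n. \<Union>k<n. A k)"
    using assms(4) by (auto simp: incseq_def intro: less_le_trans)
  then have "(\<lambda>n. \<nu> (\<Union>k<n. A k)) \<longlonglongrightarrow> \<nu> (\<Union>n. \<Union>k<n. A k)"
    using assms(3) by (simp add: continuous_from_below_def)
  moreover have "(\<Union>n. \<Union>k<n. A k) = (\<Union>n. A n)"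
    by (auto intro: lessI)
  ultimately show "(\<lambda>n. SUP k\<in>{..<n}. \<nu> (A k)) \<longlonglongrightarrow> \<nu> (\<Union>n. A n)"
    by (simp add: maxitive_UN_lessThan[OF assms(1,2,4)])
  have "incseq (\<lambda>n. SUP k\<in>{..<n}. \<nu> (A k))"
    by (auto simp: incseq_def intro!: SUP_subset_mono)
  then show "(\<lambda>n. SUP k\<in>{..<n}. \<nu> (A k)) \<longlonglongrightarrow> (SUP n. \<nu> (A n))"
    by (metis LIMSEQ_SUP SUP_UNION UN_lessThan_UNIV)
qed

lemma tendsto_SUP_shift:
  fixes f :: "nat \<Rightarrow> 'a::{complete_linorder,linorder_topology}"
  assumes "f \<longlonglongrightarrow> l"
  shows "(\<lambda>n. SUP k. f (n + k)) \<longlonglongrightarrow> l"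
proof -
  have "range (plus n) = {n..}" for n :: nat
    using image_add_atLeast[of n 0] by simp
  then have tail: "(SUP k. f (n + k)) = (SUP m\<in>{n..}. f m)" for n
    by (metis image_image)
  have "decseq (\<lambda>n. SUP m\<in>{n..}. f m)"
    by (auto simp: decseq_def intro!: SUP_subset_mono)
  then have "(\<lambda>n. SUP m\<in>{n..}. f m) \<longlonglongrightarrow> limsup f"
    by (simp add: LIMSEQ_INF limsup_INF_SUP)
  then show ?thesis
    using lim_imp_Limsup[OF trivial_limit_sequentially assms] by (simp add: tail)
qed

lemma decseq_eq_Inter_Un_diff:
  assumes "decseq B"
  shows "B n = (\<Inter>i. B i) \<union> (\<Union>k. B (n + k) - B (Suc (n + k)))"
proof
  show "(\<Inter>i. B i) \<union> (\<Union>k. B (n + k) - B (Suc (n + k))) \<subseteq> B n"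
    using decseqD[OF assms le_add1, of n] by blast
  have leaves: "\<exists>k\<in>{n..<m}. x \<in> B k - B (Suc k)"
    if "n \<le> m" "x \<in> B n" "x \<notin> B m" for x m
    using that
  proof (induction m rule: dec_induct)
    case (step m)
    then show ?case by (cases "x \<in> B m") auto
  qed simp
  show "B n \<subseteq> (\<Inter>i. B i) \<union> (\<Union>k. B (n + k) - B (Suc (n + k)))"
  proof
    fix x assume x: "x \<in> B n"
    show "x \<in> (\<Inter>i. B i) \<union> (\<Union>k. B (n + k) - B (Suc (n + k)))"
    proof (cases "\<forall>i. x \<in> B i")
      case False
      then obtain m where m: "x \<notin> B m" by blast
      with x have "n \<le> m" using decseqD[OF assms, of m n] by (meson nat_le_linear subsetD)
      with leaves x m obtain k where "n \<le> k" "x \<in> B k - B (Suc k)" by fastforce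
      then have "x \<in> B (n + (k - n)) - B (Suc (n + (k - n)))" by simp
      then show ?thesis by blast
    qed simp
  qed
qed

lemma disjoint_family_decseq_diff:
  assumes "decseq B"
  shows "disjoint_family (\<lambda>k. B k - B (Suc k))"
  unfolding disjoint_family_on_def
proof (intro ballI impI)
  fix i j :: nat assume "i \<noteq> j"
  then have "B j \<subseteq> B (Suc i) \<or> B i \<subseteq> B (Suc j)"
    using assms by (metis decseq_def linorder_neqE_nat Suc_leI)
  then show "(B i - B (Suc i)) \<inter> (B j - B (Suc j)) = {}" by blast
qed

lemma exhaustive_imp_continuous_from_above:
  assumes "sigma_algebra E \<B>" and "maxitive \<B> \<nu>" and "continuous_from_below \<B> \<nu>"
    and "exhaustive \<B> \<nu>"
  shows "continuous_from_above \<B> \<nu>"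
  unfolding continuous_from_above_def
proof (intro allI impI)
  interpret sigma_algebra E \<B> by fact
  fix D :: "nat \<Rightarrow> 'a set"
  assume "range D \<subseteq> \<B> \<and> decseq D"
  then have D: "range D \<subseteq> \<B>" "decseq D" by auto
  define I where "I = (\<Inter>i. D i)"
  define A where "A k = D k - D (Suc k)" for k
  have I: "I \<in> \<B>" and A: "range A \<subseteq> \<B>"
    using D(1) by (auto simp: I_def A_def)
  have "(\<lambda>k. \<nu> (A k)) \<longlonglongrightarrow> 0"
    using assms(4) A disjoint_family_decseq_diff[OF D(2)] by (simp add: exhaustive_def A_def)
  then have tails: "(\<lambda>n. SUP k. \<nu> (A (n + k))) \<longlonglongrightarrow> 0"
    by (rule tendsto_SUP_shift)
  have "\<nu> (D n) = max (\<nu> I) (SUP k. \<nu> (A (n + k)))" for n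
  proof -
    have "range (\<lambda>k. A (n + k)) \<subseteq> \<B>" using A by auto
    then have "(\<Union>k. A (n + k)) \<in> \<B>" by auto
    have "D n = I \<union> (\<Union>k. A (n + k))"
      unfolding I_def A_def by (rule decseq_eq_Inter_Un_diff[OF D(2)])
    then have "\<nu> (D n) = \<nu> (I \<union> (\<Union>k. A (n + k)))" by simp
    also have "\<dots> = max (\<nu> I) (\<nu> (\<Union>k. A (n + k)))"
      using assms(2) I \<open>(\<Union>k. A (n + k)) \<in> \<B>\<close> by (simp add: maxitive_def)
    also have "\<nu> (\<Union>k. A (n + k)) = (SUP k. \<nu> (A (n + k)))"
      using maxitive_continuous_from_below_UN[OF ring_of_sets_axioms assms(2,3)]
        \<open>range (\<lambda>k. A (n + k)) \<subseteq> \<B>\<close> by blast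
    finally show ?thesis .
  qed
  then show "(\<lambda>n. \<nu> (D n)) \<longlonglongrightarrow> \<nu> (\<Inter>n. D n)"
    using tendsto_max[OF tendsto_const tails, of "\<nu> I"] by (simp add: I_def)
qed

lemma continuous_from_above_imp_exhaustive:
  assumes "sigma_algebra E \<B>" and "maxitive \<B> \<nu>" and "continuous_from_above \<B> \<nu>"
  shows "exhaustive \<B> \<nu>"
  unfolding exhaustive_def
proof (intro allI impI)
  interpret sigma_algebra E \<B> by fact
  fix A :: "nat \<Rightarrow> 'a set"
  assume "range A \<subseteq> \<B> \<and> disjoint_family A"
  then have A: "range A \<subseteq> \<B>" "disjoint_family A" by auto
  define C where "C n = (\<Union>k. A (n + k))" for n
  have C: "range C \<subseteq> \<B>" using A(1) by (auto simp: C_def)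
  have "decseq C"
    by (rule decseq_SucI) (auto simp: C_def, metis add_Suc_right)
  moreover have "(\<Inter>n. C n) = {}"
  proof (rule ccontr)
    assume "(\<Inter>n. C n) \<noteq> {}"
    then obtain x where x: "\<And>n. x \<in> C n" by blast
    from x[of 0] obtain k where "x \<in> A k" by (auto simp: C_def)
    moreover from x[of "Suc k"] obtain j where "x \<in> A (Suc k + j)" by (auto simp: C_def)
    ultimately show False
      using disjoint_family_onD[OF A(2), of k "Suc k + j"] by auto
  qed
  ultimately have "(\<lambda>n. \<nu> (C n)) \<longlonglongrightarrow> \<nu> {}"
    using assms(3) C unfolding continuous_from_above_def by metis
  then have tails: "(\<lambda>n. \<nu> (C n)) \<longlonglongrightarrow> 0"
    using assms(2) by (simp add: maxitive_def)
  have le_tails: "\<nu> (A n) \<le> \<nu> (C n)" for n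
  proof (rule maxitive_mono[OF ring_of_sets_axioms assms(2)])
    show "A n \<in> \<B>" "C n \<in> \<B>" using A(1) C by auto
    show "A n \<subseteq> C n" using UN_upper[of 0 UNIV "\<lambda>k. A (n + k)"] by (simp add: C_def)
  qed
  show "(\<lambda>n. \<nu> (A n)) \<longlonglongrightarrow> 0"
    by (rule tendsto_sandwich[OF _ _ tendsto_const tails]) (auto simp: le_tails)
qed

theorem proposition6p4:
  fixes E :: "'a set" and \<B> :: "'a set set" and \<nu> :: "'a set \<Rightarrow> ennreal"
  assumes "sigma_algebra E \<B>" and "E \<noteq> {}"
    and "sigma_maxitive \<B> \<nu>"
  shows "optimal \<B> \<nu> \<longleftrightarrow> exhaustive \<B> \<nu>"
proof -
  have m: "maxitive \<B> \<nu>" and cb: "continuous_from_below \<B> \<nu>"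
    using assms(3) by (auto simp: sigma_maxitive_def)
  show ?thesis
    using exhaustive_imp_continuous_from_above[OF assms(1) m cb]
      continuous_from_above_imp_exhaustive[OF assms(1) m]
    unfolding optimal_def by (auto simp: m cb)
qed

end
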